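(* Let $\tilde f(\omega)$ be an even function with $\tilde f(0)=0$ and $\tilde f(\omega)=1$ for $|\omega|\ge1$, let $f(t)$ be its (inverse) Fourier transform, and define $F(t)=\frac{i}{2}\int du\, f(u)\,{\rm sign}(t-u)$, where ${\rm sign}(x)=1$ for $x>0$, $-1$ for $x<0$, and ${\rm sign}(0)=0$. Let $\tilde F(\omega)$ be the Fourier transform of $F$. Then $$|F(t)|\le\Bigl|\int_{|t|}^\infty f(u)\,du\Bigr|\qquad\text{and}\qquad \tilde F(\omega)=-\frac1\omega\tilde f(\omega).$$
   Context: Fourier conventions: $\tilde h(\omega)=\int dt\,e^{i\omega t}h(t)$. The typical case is $f(t)=\delta(t)-g(t)$ with $g$ an even, rapidly decaying function whose Fourier transform equals $1$ at $\omega=0$ and $0$ for $|\omega|\ge1$; the convolution with the sign function makes $F$ an ordinary function. *)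

theory Defs
  imports "HOL-Analysis.Analysis"
begin

definition FT :: "(real \<Rightarrow> complex) \<Rightarrow> real \<Rightarrow> complex" where
  "FT h w = (LINT t|lborel. exp (\<i> * complex_of_real (w * t)) * h t)"

text \<open>The distribution f = delta - g, with g an ordinary function.
  Its Fourier transform is 1 - FT g.\<close>
definition f_hat :: "(real \<Rightarrow> complex) \<Rightarrow> real \<Rightarrow> complex" where
  "f_hat g w = 1 - FT g w"

text \<open>F(t) = (i/2) int f(u) sign(t-u) du, where the delta part contributes sign t.\<close>
definition F_of :: "(real \<Rightarrow> complex) \<Rightarrow> real \<Rightarrow> complex" where
  "F_of g t = (\<i> / 2) * (complex_of_real (sgn t)
                 - (LINT u|lborel. g u * complex_of_real (sgn (t - u))))"

text \<open>The tail integral of f from |t| to infinity. For t nonzero the delta does not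
  contribute; at t = 0 we use the symmetric convention (delta contributes 1/2),
  consistent with sign 0 = 0.\<close>
definition f_tail :: "(real \<Rightarrow> complex) \<Rightarrow> real \<Rightarrow> complex" where
  "f_tail g t = (if t = 0 then 1/2 else 0) - (LINT u:{\<bar>t\<bar>..}|lborel. g u)"

end

(*
  Since the Fourier transform of g is 1 at 0, g has total integral 1.  Writing
  A = int_{[t,oo)} g and B = int_{(-oo,t]} g, so that A + B = 1, one finds F(t) = iA for t > 0,
  F(t) = -iB for t < 0 and F(0) = i(A - 1/2), while the tail is -A, -int_{[-t,oo)} g and 1/2 - A.
  So |F(t)| = |tail(t)| once int_{[-t,oo)} g = int_{(-oo,t]} g, i.e. once g is symmetric.  This
  follows from the evenness of its Fourier transform by uniqueness of Fourier transforms of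
  integrable functions, which splitting g into nonnegative parts reduces to Levy's uniqueness
  theorem for characteristic functions.

  For the transform, F(t) = i int g(u) K(t,u) du where t |-> K(t,u) is, almost everywhere, the
  oriented indicator of the interval between 0 and u, with transform (e^(iwu) - 1)/(iw).
  Fubini, justified by int |u| |g(u)| du < oo, gives FT F w = (FT g w - 1)/w = -f_hat g w / w.
*)

theory Submission
  imports Defs "HOL-Probability.Probability"
begin

lemma set_integrable_if_integrable:
  fixes f :: "'a \<Rightarrow> 'b::{banach, second_countable_topology}"
  shows "integrable M f \<Longrightarrow> A \<in> sets M \<Longrightarrow> set_integrable M A f"
  unfolding set_integrable_def by (rule integrable_mult_indicator)

lemma Re_set_integral:
  fixes f :: "'a \<Rightarrow> complex"
  assumes "set_integrable M A f"
  shows "Re (LINT x:A|M. f x) = (LINT x:A|M. Re (f x))"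
  using assms unfolding set_integrable_def set_lebesgue_integral_def
  by (simp del: integral_Re add: integral_Re[symmetric])

lemma integrable_iexp_mult:
  fixes h :: "real \<Rightarrow> complex"
  assumes "integrable lborel h"
  shows "integrable lborel (\<lambda>t. iexp (w * t) * h t)"
  using assms by (rule Bochner_Integration.integrable_bound) (use assms in \<open>auto simp: norm_mult\<close>)

lemma FT_diff:
  assumes "integrable lborel a" "integrable lborel b"
  shows "FT (\<lambda>t. a t - b t) w = FT a w - FT b w"
  unfolding FT_def right_diff_distrib
  by (rule Bochner_Integration.integral_diff) (intro integrable_iexp_mult assms)+

lemma FT_mult_left: "FT (\<lambda>t. c * h t) w = c * FT h w"
proof -
  have "(\<lambda>t. iexp (w * t) * (c * h t)) = (\<lambda>t. c * (iexp (w * t) * h t))"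
    by (simp add: mult.left_commute)
  then show ?thesis
    unfolding FT_def by simp
qed

lemma FT_divide: "FT (\<lambda>t. h t / c) w = FT h w / c"
  unfolding FT_def by (simp add: integral_divide_zero[symmetric] del: integral_divide_zero)

lemma FT_reflect: "FT (\<lambda>t. h (- t)) w = FT h (- w)"
  unfolding FT_def
  using lborel_integral_real_affine[of "-1" "\<lambda>t. iexp (- w * t) * h t" 0] by simp

lemma FT_Re:
  fixes h :: "real \<Rightarrow> complex"
  assumes "integrable lborel h"
  shows "FT (\<lambda>t. of_real (Re (h t))) w = (FT h w + cnj (FT h (- w))) / 2"
proof -
  have "FT (\<lambda>t. of_real (Re (h t))) w
      = (LINT t|lborel. (iexp (w * t) * h t + cnj (iexp (- w * t) * h t)) / 2)"
    unfolding FT_def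
    by (rule Bochner_Integration.integral_cong)
       (simp_all add: exp_cnj complex_add_cnj distrib_left[symmetric])
  also have "\<dots> = ((LINT t|lborel. iexp (w * t) * h t) + (LINT t|lborel. cnj (iexp (- w * t) * h t))) / 2"
    unfolding integral_divide_zero
    by (intro arg_cong[where f="\<lambda>z. z / 2"] Bochner_Integration.integral_add integrable_cnj
        integrable_iexp_mult assms)
  finally show ?thesis
    by (simp only: FT_def Bochner_Integration.integral_cnj)
qed

lemma char_density_lborel:
  fixes p :: "real \<Rightarrow> real"
  assumes "\<And>x. 0 \<le> p x" "p \<in> borel_measurable borel"
  shows "char (density lborel (\<lambda>x. ennreal (p x))) w = FT (\<lambda>x. of_real (p x)) w"
  unfolding char_def FT_def using assms
  by (subst integral_density) (auto simp: scaleR_conv_of_real mult.commute)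

lemma real_distribution_density_lborel:
  fixes p :: "real \<Rightarrow> real"
  assumes "\<And>x. 0 \<le> p x" "integrable lborel p" "(LINT x|lborel. p x) = 1"
  shows "real_distribution (density lborel (\<lambda>x. ennreal (p x)))"
  unfolding real_distribution_def real_distribution_axioms_def
proof (intro conjI prob_spaceI)
  have "emeasure (density lborel (\<lambda>x. ennreal (p x))) UNIV = (\<integral>\<^sup>+ x. ennreal (p x) \<partial>lborel)"
    using assms(2) by (simp add: emeasure_density)
  also have "\<dots> = 1"
    using assms by (subst nn_integral_eq_integral) auto
  finally show "emeasure (density lborel (\<lambda>x. ennreal (p x))) (space (density lborel (\<lambda>x. ennreal (p x)))) = 1"
    by simp
qed simp

lemma set_integral_atMost_eq_if_FT_eq_nonneg:
  fixes p q :: "real \<Rightarrow> real"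
  assumes p: "\<And>x. 0 \<le> p x" "integrable lborel p" and q: "\<And>x. 0 \<le> q x" "integrable lborel q"
    and FT_eq: "\<And>w. FT (\<lambda>x. of_real (p x)) w = FT (\<lambda>x. of_real (q x)) w"
  shows "(LINT x:{..t}|lborel. p x) = (LINT x:{..t}|lborel. q x)"
proof -
  have [measurable]: "p \<in> borel_measurable borel" "q \<in> borel_measurable borel"
    using p q by auto
  define c where "c = (LINT x|lborel. p x)"
  have c_q: "c = (LINT x|lborel. q x)"
    using FT_eq[of 0] by (simp add: c_def FT_def)
  show ?thesis
  proof (cases "c = 0")
    case True
    then have "(LINT x|lborel. p x) = 0" "(LINT x|lborel. q x) = 0"
      using c_q by (simp_all add: c_def)
    then have "AE x in lborel. p x = 0" "AE x in lborel. q x = 0"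
      using p q by (simp_all add: integral_nonneg_eq_0_iff_AE)
    then have "AE x in lborel. indicator {..t} x *\<^sub>R p x = indicator {..t} x *\<^sub>R q x"
      by eventually_elim simp
    then show ?thesis
      unfolding set_lebesgue_integral_def by (intro integral_cong_AE) auto
  next
    case False
    then have "c > 0"
      using p by (simp add: c_def order_less_le)
    let ?M = "\<lambda>r. density lborel (\<lambda>x. ennreal (r x / c))"
    have "?M p = ?M q"
    proof (rule Levy_uniqueness)
      show "real_distribution (?M p)" "real_distribution (?M q)"
        using p q \<open>c > 0\<close> c_q by (auto intro!: real_distribution_density_lborel simp: c_def)
      show "char (?M p) = char (?M q)"
        using p q \<open>c > 0\<close> FT_eq by (simp add: char_density_lborel FT_divide fun_eq_iff)
    qed
    then have "(LINT x|?M p. indicator {..t} x) = (LINT x|?M q. indicator {..t} x :: real)"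
      by (rule arg_cong)
    then have "(LINT x|lborel. p x / c * indicator {..t} x) = (LINT x|lborel. q x / c * indicator {..t} x)"
      using p q \<open>c > 0\<close> by (subst (asm) (1 2) integral_density) auto
    then show ?thesis
      using \<open>c > 0\<close> unfolding set_lebesgue_integral_def by (simp add: mult.commute)
  qed
qed

lemma set_integral_atMost_eq_if_FT_eq_real:
  fixes a b :: "real \<Rightarrow> real"
  assumes ia: "integrable lborel a" and ib: "integrable lborel b"
    and FT_eq: "\<And>w. FT (\<lambda>x. of_real (a x)) w = FT (\<lambda>x. of_real (b x)) w"
  shows "(LINT x:{..t}|lborel. a x) = (LINT x:{..t}|lborel. b x)"
proof -
  define p where "p x = max (a x) 0 + max (- b x) 0" for x
  define q where "q x = max (b x) 0 + max (- a x) 0" for x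
  have p_minus_q: "p x - q x = a x - b x" for x
    unfolding p_def q_def by auto
  have ip: "integrable lborel p" and iq: "integrable lborel q"
    unfolding p_def q_def using ia ib by auto
  have "FT (\<lambda>x. of_real (p x)) w = FT (\<lambda>x. of_real (q x)) w" for w
  proof -
    have "FT (\<lambda>x. of_real (p x)) w - FT (\<lambda>x. of_real (q x)) w = FT (\<lambda>x. of_real (p x - q x)) w"
      using ip iq by (simp add: FT_diff)
    also have "\<dots> = FT (\<lambda>x. of_real (a x)) w - FT (\<lambda>x. of_real (b x)) w"
      using ia ib by (simp add: p_minus_q FT_diff)
    finally show ?thesis
      using FT_eq[of w] by simp
  qed
  then have "(LINT x:{..t}|lborel. p x) = (LINT x:{..t}|lborel. q x)"
    by (intro set_integral_atMost_eq_if_FT_eq_nonneg ip iq) (auto simp: p_def q_def)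
  then have "(LINT x:{..t}|lborel. p x - q x) = 0"
    using ip iq by (simp add: set_integrable_if_integrable)
  then show ?thesis
    using ia ib by (simp add: p_minus_q set_integrable_if_integrable)
qed

lemma set_integral_atMost_eq_if_FT_eq:
  fixes g h :: "real \<Rightarrow> complex"
  assumes ig: "integrable lborel g" and ih: "integrable lborel h"
    and FT_eq: "\<And>w. FT g w = FT h w"
  shows "(LINT x:{..t}|lborel. g x) = (LINT x:{..t}|lborel. h x)"
proof -
  have Re_eq: "Re (LINT x:{..t}|lborel. a x) = Re (LINT x:{..t}|lborel. b x)"
    if "integrable lborel a" "integrable lborel b" "\<And>w. FT a w = FT b w" for a b :: "real \<Rightarrow> complex"
    using that by (simp add: Re_set_integral set_integrable_if_integrable
        set_integral_atMost_eq_if_FT_eq_real FT_Re)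
  have "Im (LINT x:{..t}|lborel. g x) = Im (LINT x:{..t}|lborel. h x)"
    using Re_eq[of "\<lambda>x. \<i> * g x" "\<lambda>x. \<i> * h x"] ig ih FT_eq
    by (simp add: FT_mult_left)
  with Re_eq[OF ig ih FT_eq] show ?thesis
    by (rule complex_eqI)
qed

lemma integral_mult_sgn_diff:
  fixes g :: "real \<Rightarrow> complex"
  assumes "integrable lborel g"
  shows "(LINT u|lborel. g u * of_real (sgn (t - u)))
       = (LINT u:{..t}|lborel. g u) - (LINT u:{t..}|lborel. g u)"
proof -
  have "(LINT u|lborel. g u * of_real (sgn (t - u)))
      = (LINT u|lborel. indicator {..t} u *\<^sub>R g u - indicator {t..} u *\<^sub>R g u)"
    by (rule Bochner_Integration.integral_cong) (auto simp: indicator_def sgn_if)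
  then show ?thesis
    using assms unfolding set_lebesgue_integral_def by (simp add: integrable_mult_indicator)
qed

lemma set_integral_atMost_add_atLeast:
  fixes g :: "real \<Rightarrow> complex"
  assumes "integrable lborel g"
  shows "(LINT u:{..t}|lborel. g u) + (LINT u:{t..}|lborel. g u) = (LINT u|lborel. g u)"
proof -
  have "(LINT u:{..t}|lborel. g u) + (LINT u:{t..}|lborel. g u)
      = (LINT u|lborel. indicator {..t} u *\<^sub>R g u + indicator {t..} u *\<^sub>R g u)"
    unfolding set_lebesgue_integral_def
    by (rule Bochner_Integration.integral_add[symmetric]) (auto intro: integrable_mult_indicator assms)
  also have "\<dots> = (LINT u|lborel. g u)"
    using assms AE_lborel_singleton[of t]
    by (intro integral_cong_AE) (auto elim!: eventually_mono simp: indicator_def)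
  finally show ?thesis .
qed

lemma norm_F_of_eq_norm_f_tail:
  fixes g :: "real \<Rightarrow> complex"
  assumes ig: "integrable lborel g" and total: "(LINT u|lborel. g u) = 1"
    and reflect: "(LINT u:{-t..}|lborel. g u) = (LINT u:{..t}|lborel. g u)"
  shows "norm (F_of g t) = norm (f_tail g t)"
proof -
  define A where "A = (LINT u:{t..}|lborel. g u)"
  define B where "B = (LINT u:{..t}|lborel. g u)"
  have B: "B = 1 - A"
    using set_integral_atMost_add_atLeast[OF ig, of t] total by (simp add: A_def B_def eq_diff_eq)
  have F: "F_of g t = \<i> / 2 * (of_real (sgn t) - (B - A))"
    unfolding F_of_def integral_mult_sgn_diff[OF ig] A_def B_def ..
  consider "t > 0" | "t = 0" | "t < 0"
    by linarith
  then show ?thesis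
  proof cases
    case 1
    then have "F_of g t = \<i> * A" "f_tail g t = - A"
      unfolding F B f_tail_def A_def by (simp_all add: field_simps)
    then show ?thesis
      by (simp add: norm_mult)
  next
    case 2
    then have "F_of g t = \<i> * (A - 1/2)" "f_tail g t = - (A - 1/2)"
      unfolding F B f_tail_def A_def by (simp_all add: field_simps)
    then show ?thesis
      by (simp only: norm_mult norm_minus_cancel) simp
  next
    case 3
    then have "F_of g t = - \<i> * B"
      unfolding F B by (simp add: field_simps)
    moreover have "f_tail g t = - B"
      unfolding f_tail_def B_def using 3 reflect by simp
    ultimately show ?thesis
      by (simp add: norm_mult)
  qed
qed

definition interval_kernel :: "real \<Rightarrow> real \<Rightarrow> real" where
  "interval_kernel t u = (sgn t - sgn (t - u)) / 2"

lemma interval_kernel_measurable[measurable]: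
  "(\<lambda>(u, t). interval_kernel t u) \<in> borel_measurable (borel \<Otimes>\<^sub>M borel)"
  unfolding interval_kernel_def by measurable

lemma AE_interval_kernel_eq:
  "AE t in lborel. interval_kernel t u = indicator {0<..<u} t - indicator {u<..<0} t"
  using AE_lborel_singleton[of 0] AE_lborel_singleton[of u]
  by eventually_elim (auto simp: interval_kernel_def indicator_def sgn_if)

lemma F_of_eq_integral_interval_kernel:
  fixes g :: "real \<Rightarrow> complex"
  assumes ig: "integrable lborel g" and total: "(LINT u|lborel. g u) = 1"
  shows "F_of g t = \<i> * (LINT u|lborel. g u * of_real (interval_kernel t u))"
proof -
  have "integrable lborel (\<lambda>u. g u * of_real (sgn (t - u)))"
    using ig by (rule Bochner_Integration.integrable_bound) (use ig in \<open>auto simp: norm_mult sgn_if\<close>)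
  then have "(LINT u|lborel. g u * of_real (interval_kernel t u))
      = ((LINT u|lborel. g u) * of_real (sgn t) - (LINT u|lborel. g u * of_real (sgn (t - u)))) / 2"
    using ig by (simp add: interval_kernel_def diff_divide_distrib right_diff_distrib)
  then show ?thesis
    unfolding F_of_def total by simp
qed

lemma integral_abs_interval_kernel:
  shows "integrable lborel (\<lambda>t. \<bar>interval_kernel t u\<bar>)"
    and "(LINT t|lborel. \<bar>interval_kernel t u\<bar>) = \<bar>u\<bar>"
proof -
  have ae: "AE t in lborel. \<bar>interval_kernel t u\<bar> = indicator {0<..<u} t + indicator {u<..<0} t"
    using AE_interval_kernel_eq[of u] by eventually_elim (auto simp: indicator_def)
  have m: "(\<lambda>t. \<bar>interval_kernel t u\<bar>) \<in> borel_measurable lborel"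
    unfolding interval_kernel_def by measurable
  have "integrable lborel (\<lambda>t. indicator {0<..<u} t + indicator {u<..<0} t :: real)"
    "(LINT t|lborel. indicator {0<..<u} t + indicator {u<..<0} t) = \<bar>u\<bar>"
    by (cases "0 \<le> u"; simp)+
  then show "integrable lborel (\<lambda>t. \<bar>interval_kernel t u\<bar>)"
    and "(LINT t|lborel. \<bar>interval_kernel t u\<bar>) = \<bar>u\<bar>"
    using integrable_cong_AE[OF m _ ae] integral_cong_AE[OF m _ ae] by simp_all
qed

lemma has_vector_derivative_iexp_div:
  assumes "w \<noteq> 0"
  shows "((\<lambda>t. iexp (w * t) / (\<i> * of_real w)) has_vector_derivative iexp (w * x)) (at x within S)"
proof -
  have "((\<lambda>z. exp (\<i> * of_real w * z) / (\<i> * of_real w)) \<circ> complex_of_real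
      has_vector_derivative 1 * exp (\<i> * of_real w * of_real x)) (at x within S)"
    by (rule field_vector_diff_chain_within)
       (use assms in \<open>auto intro!: derivative_eq_intros has_vector_derivative_real_field\<close>)
  then show ?thesis
    by (simp add: o_def mult.assoc)
qed

lemma FT_interval_kernel:
  assumes w: "w \<noteq> 0"
  shows "FT (\<lambda>t. of_real (interval_kernel t u)) w = (iexp (w * u) - 1) / (\<i> * of_real w)"
proof -
  have set_integrable_iexp: "set_integrable lborel {a<..<b} (\<lambda>t. iexp (w * t))" for a b
    by (rule set_integrable_subset[of _ "{a..b}"])
       (auto simp: set_integrable_def intro!: borel_integrable_compact continuous_intros)
  have "FT (\<lambda>t. of_real (interval_kernel t u)) w
      = (LINT t|lborel. indicator {0<..<u} t *\<^sub>R iexp (w * t) - indicator {u<..<0} t *\<^sub>R iexp (w * t))"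
    unfolding FT_def using AE_interval_kernel_eq[of u]
    by (intro integral_cong_AE) (auto elim!: eventually_mono simp: indicator_def interval_kernel_def)
  also have "\<dots> = (LINT t:{0<..<u}|lborel. iexp (w * t)) - (LINT t:{u<..<0}|lborel. iexp (w * t))"
    unfolding set_lebesgue_integral_def
    by (rule Bochner_Integration.integral_diff) (use set_integrable_iexp in \<open>simp_all add: set_integrable_def\<close>)
  also have "\<dots> = (LBINT t=ereal 0..ereal u. iexp (w * t))"
    by (cases "0 \<le> u") (auto simp: interval_lebesgue_integral_def set_lebesgue_integral_def)
  also have "\<dots> = iexp (w * u) / (\<i> * of_real w) - iexp (w * 0) / (\<i> * of_real w)"
    by (rule interval_integral_FTC_finite)
       (auto intro!: continuous_intros has_vector_derivative_iexp_div[OF w] simp del: of_real_mult)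
  finally show ?thesis
    by (simp add: diff_divide_distrib)
qed

lemma FT_F_of:
  fixes g :: "real \<Rightarrow> complex"
  assumes ig: "integrable lborel g" and iug: "integrable lborel (\<lambda>u. of_real \<bar>u\<bar> * g u)"
    and total: "(LINT u|lborel. g u) = 1" and w: "w \<noteq> 0"
  shows "FT (F_of g) w = - f_hat g w / of_real w"
proof -
  define k where "k u t = \<i> * g u * (iexp (w * t) * of_real (interval_kernel t u))" for u t
  have [measurable]: "g \<in> borel_measurable borel"
    using ig by auto
  have k_measurable: "(\<lambda>(u, t). k u t) \<in> borel_measurable (lborel \<Otimes>\<^sub>M lborel)"
    unfolding k_def by measurable
  have "integrable lborel (\<lambda>t. of_real (interval_kernel t u) :: complex)" for u
    using integral_abs_interval_kernel[of u] by (simp add: integrable_abs_iff)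
  then have k_integrable: "integrable lborel (k u)" for u
    unfolding k_def by (intro integrable_mult_right integrable_iexp_mult)
  have k_integral: "(LINT t|lborel. k u t) = g u * (iexp (w * u) - 1) / of_real w" for u
    unfolding k_def using FT_interval_kernel[OF w, of u] by (simp add: FT_def)
  have "integrable (lborel \<Otimes>\<^sub>M lborel) (\<lambda>(u, t). k u t)"
  proof (rule lborel_pair.Fubini_integrable[OF k_measurable])
    have "(LINT t|lborel. norm (k u t)) = norm (of_real \<bar>u\<bar> * g u)" for u
      using integral_abs_interval_kernel[of u] by (simp add: k_def norm_mult)
    then show "integrable lborel (\<lambda>u. LINT t|lborel. norm (case (u, t) of (u, t) \<Rightarrow> k u t))"
      using iug by simp
  qed (simp add: k_integrable)
  have "FT (F_of g) w = (LINT t|lborel. LINT u|lborel. k u t)"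
    unfolding FT_def F_of_eq_integral_interval_kernel[OF ig total] k_def
    by (simp add: mult_ac flip: integral_mult_right_zero)
  also have "\<dots> = (LINT u|lborel. LINT t|lborel. k u t)"
    using \<open>integrable _ (\<lambda>(u, t). k u t)\<close> by (rule lborel_pair.Fubini_integral)
  also have "\<dots> = ((LINT u|lborel. iexp (w * u) * g u) - (LINT u|lborel. g u)) / of_real w"
    using integrable_iexp_mult[OF ig, of w] ig
    by (simp add: k_integral right_diff_distrib diff_divide_distrib mult.commute)
  also have "\<dots> = - f_hat g w / of_real w"
    unfolding f_hat_def FT_def total by (simp add: field_simps)
  finally show ?thesis .
qed

lemma integrable_lborel_quadratic_decay:
  fixes h :: "real \<Rightarrow> complex"
  assumes "continuous_on UNIV h"
    and "\<And>t. norm (h t) \<le> C0" and "\<And>t. t\<^sup>2 * norm (h t) \<le> C2"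
  shows "integrable lborel h"
proof (rule Bochner_Integration.integrable_bound)
  show "integrable lborel (\<lambda>t. (C0 + C2) * inverse (1 + t\<^sup>2))"
    using integrable_inverse_1_plus_square by (simp add: set_integrable_def einterval_iff)
  show "h \<in> borel_measurable lborel"
    using assms(1) by (simp add: borel_measurable_continuous_onI)
  have "norm (h t) \<le> (C0 + C2) * inverse (1 + t\<^sup>2)" for t
    using assms(2,3)[of t] by (simp add: field_simps add_pos_nonneg)
  then show "AE t in lborel. norm (h t) \<le> norm ((C0 + C2) * inverse (1 + t\<^sup>2))"
    by (intro AE_I2) (metis abs_ge_self order_trans real_norm_def)
qed

theorem lemma14:
  fixes g :: "real \<Rightarrow> complex"
  assumes cont: "continuous_on UNIV g"
    and rapid: "\<And>k::nat. \<exists>C. \<forall>t. \<bar>t\<bar> ^ k * norm (g t) \<le> C"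
    and even: "\<And>w. f_hat g (- w) = f_hat g w"
    and zero: "f_hat g 0 = 0"
    and one: "\<And>w. \<bar>w\<bar> \<ge> 1 \<Longrightarrow> f_hat g w = 1"
  shows "(\<forall>t. norm (F_of g t) \<le> norm (f_tail g t))
       \<and> (\<forall>w. w \<noteq> 0 \<longrightarrow> FT (F_of g) w = - f_hat g w / complex_of_real w)"
proof -
  from rapid obtain C where C: "\<And>k t. \<bar>t\<bar> ^ k * norm (g t) \<le> C k"
    by metis
  have ig: "integrable lborel g"
    using C[where k=0] C[where k=2] by (intro integrable_lborel_quadratic_decay[OF cont]) auto
  have iug: "integrable lborel (\<lambda>u. of_real \<bar>u\<bar> * g u)"
    using C[where k=1] C[where k=3]
    by (intro integrable_lborel_quadratic_decay continuous_intros cont)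
       (auto simp: norm_mult power_def mult_ac)
  have total: "(LINT u|lborel. g u) = 1"
    using zero by (simp add: f_hat_def FT_def)
  have "FT (\<lambda>u. g (- u)) w = FT g w" for w
    using even[of w] by (simp add: FT_reflect f_hat_def)
  then have "(LINT u:{..t}|lborel. g (- u)) = (LINT u:{..t}|lborel. g u)" for t
    using ig lborel_integrable_real_affine[OF ig, of "-1" 0]
    by (intro set_integral_atMost_eq_if_FT_eq) simp_all
  then have "(LINT u:{-t..}|lborel. g u) = (LINT u:{..t}|lborel. g u)" for t
    by (simp add: set_integral_reflect[of "{-t..}"] atMost_def)
  then show ?thesis
    using norm_F_of_eq_norm_f_tail[OF ig total] FT_F_of[OF ig iug total] by simp
qed

end
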